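(* Let $d\ge 2$ and let $\rho$ be a density operator on $\mathbb{C}^d$. Suppose there exists a diagonal unitary $U$ (in the computational basis) such that $\rho'=U^\dagger\rho U$ has entries $\rho'_{ij}=|\rho_{ij}|$ for all $i,j$. Then $$C_{\mathcal{F}}(\rho)=\overline{C}_{\mathcal{R}}(\rho)=\overline{C}_{l_1}(\rho).$$
   Context: Fix the computational basis $\{|i\rangle\}_{i=0}^{d-1}$ of $\mathbb{C}^d$ as the incoherent basis. Let $\mathcal{D}(\mathbb{C}^d)$ be the set of density operators, $\Delta(\rho)=\sum_i|i\rangle\langle i|\rho|i\rangle\langle i|$, and $\mathcal{I}=\{\rho\in\mathcal{D}(\mathbb{C}^d):\rho=\Delta(\rho)\}$ the incoherent (diagonal) states. Let $|\phi^+\rangle=\frac{1}{\sqrt d}\sum_{i=0}^{d-1}|i\rangle$ and let $\mathcal{U}_d$ be the set of diagonal unitary matrices. The quantum coherence fraction is $C_{\mathcal{F}}(\rho)=\max_{U\in\mathcal{U}_d}\langle\phi^+|U^\dagger\rho U|\phi^+\rangle$ (equivalently, the maximum of $\langle\phi|\rho|\phi\rangle$ over maximally coherent states $|\phi\rangle$, i.e. states of the form $\frac1{\sqrt d}\sum_i e^{\mathrm{i}\theta_i}|i\rangle$). The $l_1$ norm of coherence is $C_{l_1}(\rho)=\sum_{i\ne j}|\rho_{ij}|$, and the robustness of coherence is $C_{\mathcal{R}}(\rho)=\min\{s\ge0: \exists\tau\in\mathcal{D}(\mathbb{C}^d),\ (\rho+s\tau)/(1+s)\in\mathcal{I}\}$.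 The normalized versions are $\overline{C}_{l_1}(\rho)=(1+C_{l_1}(\rho))/d$ and $\overline{C}_{\mathcal{R}}(\rho)=(1+C_{\mathcal{R}}(\rho))/d$. *)

theory Defs
  imports "HOL-Analysis.Analysis"
begin

text \<open>Operators on C^d are complex matrices indexed by a finite type 'n, d = CARD('n);
  the computational basis is the standard basis indexed by 'n.\<close>

definition adjoint_mat :: "complex^'n^'n \<Rightarrow> complex^'n^'n" where
  "adjoint_mat A = (\<chi> i j. cnj (A $ j $ i))"

definition hermitian_mat :: "complex^'n^'n \<Rightarrow> bool" where
  "hermitian_mat A \<longleftrightarrow> adjoint_mat A = A"

definition psd_mat :: "complex^'n^'n \<Rightarrow> bool" where
  "psd_mat A \<longleftrightarrow> hermitian_mat A \<and>
     (\<forall>v :: complex^'n. 0 \<le> Re (\<Sum>i\<in>UNIV. \<Sum>j\<in>UNIV. cnj (v $ i) * A $ i $ j * v $ j))"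

definition density_op :: "complex^'n^'n \<Rightarrow> bool" where
  "density_op A \<longleftrightarrow> psd_mat A \<and> trace A = 1"

definition diag_mat :: "complex^'n^'n \<Rightarrow> bool" where
  "diag_mat A \<longleftrightarrow> (\<forall>i j. i \<noteq> j \<longrightarrow> A $ i $ j = 0)"

definition incoherent :: "complex^'n^'n \<Rightarrow> bool" where
  "incoherent A \<longleftrightarrow> density_op A \<and> diag_mat A"

definition unitary_mat :: "complex^'n^'n \<Rightarrow> bool" where
  "unitary_mat U \<longleftrightarrow> U ** adjoint_mat U = mat 1 \<and> adjoint_mat U ** U = mat 1"

definition diag_unitary :: "complex^'n^'n \<Rightarrow> bool" where
  "diag_unitary U \<longleftrightarrow> unitary_mat U \<and> diag_mat U"

text \<open>\<langle>\<phi>+|A|\<phi>+\<rangle> with \<phi>+ = (1/sqrt d) \<Sum>i |i\<rangle>.\<close>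
definition phi_plus_exp :: "complex^'n^'n \<Rightarrow> complex" where
  "phi_plus_exp A = (\<Sum>i\<in>UNIV. \<Sum>j\<in>UNIV. A $ i $ j) / of_nat CARD('n)"

text \<open>Coherence fraction (the value is real for Hermitian \<rho>; we take the real part).\<close>
definition coh_fraction :: "complex^'n^'n \<Rightarrow> real" where
  "coh_fraction \<rho> = (SUP U\<in>{U. diag_unitary U}. Re (phi_plus_exp (adjoint_mat U ** \<rho> ** U)))"

definition coh_l1 :: "complex^'n^'n \<Rightarrow> real" where
  "coh_l1 \<rho> = (\<Sum>i\<in>UNIV. \<Sum>j\<in>UNIV. if i \<noteq> j then cmod (\<rho> $ i $ j) else 0)"

definition coh_robustness :: "complex^'n^'n \<Rightarrow> real" where
  "coh_robustness \<rho> = Inf {s::real. 0 \<le> s \<and> (\<exists>\<tau>. density_op \<tau> \<and>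
       incoherent (\<chi> i j. (\<rho> $ i $ j + complex_of_real s * \<tau> $ i $ j) / (1 + complex_of_real s)))}"

definition coh_l1_norm :: "complex^'n^'n \<Rightarrow> real" where
  "coh_l1_norm \<rho> = (1 + coh_l1 \<rho>) / real CARD('n)"

definition coh_robustness_norm :: "complex^'n^'n \<Rightarrow> real" where
  "coh_robustness_norm \<rho> = (1 + coh_robustness \<rho>) / real CARD('n)"

end

theory Submission
  imports Defs
begin

text \<open>Conjugation by a diagonal unitary V only changes the phases of the entries of \<rho>, and
  \<langle>\<phi>+|V* \<rho> V|\<phi>+\<rangle> = \<langle>v|\<rho>|v\<rangle>/d for the unimodular vector v = diag V. Hence
  Re \<langle>v|\<rho>|v\<rangle> \<le> \<Sum>ij |\<rho>ij| = 1 + C_l1(\<rho>), with equality for u = diag U when U aligns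
  the phases as in the hypothesis; so C_F = (1 + C_l1)/d.

  C_R \<le> C_l1 holds for every state: the matrix with off-diagonal entries -\<rho>ij and i-th diagonal
  entry \<Sum>(j \<noteq> i) |\<rho>ij| is diagonally dominant, hence positive semidefinite, has trace C_l1,
  and adding it to \<rho> removes all coherences. Conversely, if (\<rho> + s \<tau>)/(1 + s) is diagonal,
  evaluating at u gives 1 + C_l1 = \<langle>u|\<rho>|u\<rangle> = (1 + s) - s \<langle>u|\<tau>|u\<rangle> \<le> 1 + s.\<close>

lemma sum_UNIV_eq_single:
  fixes f :: "'a::finite \<Rightarrow> 'b::comm_monoid_add"
  assumes "\<And>j. j \<noteq> i \<Longrightarrow> f j = 0"
  shows "(\<Sum>j\<in>UNIV. f j) = f i"
  using sum.mono_neutral_left[of UNIV "{i}" f] assms by auto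

lemma hermitian_mat_entry:
  assumes "hermitian_mat A"
  shows "A $ j $ i = cnj (A $ i $ j)"
proof -
  have "adjoint_mat A $ j $ i = A $ j $ i"
    using assms unfolding hermitian_mat_def by simp
  then show ?thesis
    unfolding adjoint_mat_def by simp
qed

lemma hermitian_matI:
  assumes "\<And>i j. A $ j $ i = cnj (A $ i $ j)"
  shows "hermitian_mat A"
  unfolding hermitian_mat_def adjoint_mat_def by (simp add: vec_eq_iff assms[symmetric])

definition quad_form :: "complex^'n^'n \<Rightarrow> complex^'n \<Rightarrow> complex" where
  "quad_form A v = (\<Sum>i\<in>UNIV. \<Sum>j\<in>UNIV. cnj (v $ i) * A $ i $ j * v $ j)"

lemma psd_mat_iff_quad_form:
  "psd_mat A \<longleftrightarrow> hermitian_mat A \<and> (\<forall>v. 0 \<le> Re (quad_form A v))"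
  unfolding psd_mat_def quad_form_def by simp

lemma quad_form_lincomb:
  assumes "\<And>i j. A $ i $ j = a * B $ i $ j + b * C $ i $ j"
  shows "quad_form A v = a * quad_form B v + b * quad_form C v"
  unfolding quad_form_def assms by (simp add: sum.distrib sum_distrib_left algebra_simps)

lemma quad_form_diag_mat:
  assumes "diag_mat A"
  shows "quad_form A v = (\<Sum>i\<in>UNIV. A $ i $ i * of_real ((cmod (v $ i))\<^sup>2))"
proof -
  have "(\<Sum>j\<in>UNIV. cnj (v $ i) * A $ i $ j * v $ j) = cnj (v $ i) * A $ i $ i * v $ i" for i
    by (rule sum_UNIV_eq_single) (use assms in \<open>simp add: diag_mat_def\<close>)
  moreover have "cnj (v $ i) * A $ i $ i * v $ i = A $ i $ i * of_real ((cmod (v $ i))\<^sup>2)" for i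
    unfolding complex_norm_square by (simp add: mult_ac)
  ultimately show ?thesis
    unfolding quad_form_def by simp
qed

lemma diag_mat_conj_entry:
  assumes "diag_mat U"
  shows "(adjoint_mat U ** A ** U) $ i $ j = cnj (U $ i $ i) * A $ i $ j * U $ j $ j"
proof -
  have "(adjoint_mat U ** A) $ i $ k = cnj (U $ i $ i) * A $ i $ k" for k
    unfolding matrix_matrix_mult_def adjoint_mat_def vec_lambda_beta
    by (rule sum_UNIV_eq_single) (use assms in \<open>simp add: diag_mat_def\<close>)
  then show ?thesis
    unfolding matrix_matrix_mult_def[of "adjoint_mat U ** A"] vec_lambda_beta
    by (subst sum_UNIV_eq_single[where i = j]) (use assms in \<open>simp_all add: diag_mat_def\<close>)
qed

lemma diag_unitary_entry_norm:
  assumes "diag_unitary U"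
  shows "cmod (U $ i $ i) = 1"
proof -
  have "cnj (U $ i $ i) * U $ i $ i = (adjoint_mat U ** U) $ i $ i"
    using assms diag_mat_conj_entry[of U "mat 1", unfolded matrix_mul_rid]
    unfolding diag_unitary_def by (simp add: mat_def)
  also have "\<dots> = 1"
    using assms unfolding diag_unitary_def unitary_mat_def by (simp add: mat_def)
  finally have "(cmod (U $ i $ i))\<^sup>2 = 1"
    by (metis complex_norm_square mult.commute of_real_eq_1_iff)
  then show ?thesis
    using norm_ge_zero[of "U $ i $ i"] by (auto simp: power2_eq_1_iff)
qed

lemma quad_form_axis: "quad_form A (axis i 1) = A $ i $ i"
proof -
  have "quad_form A (axis i 1) = (\<Sum>k\<in>UNIV. \<Sum>j\<in>UNIV. if k = i then if j = i then A $ k $ j else 0 else 0)"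
    unfolding quad_form_def axis_def by (intro sum.cong) auto
  also have "\<dots> = A $ i $ i"
    by (subst sum_UNIV_eq_single[where i = i], simp)+ simp
  finally show ?thesis .
qed

lemma psd_mat_diag_norm:
  assumes "psd_mat A"
  shows "cmod (A $ i $ i) = Re (A $ i $ i)"
proof -
  have herm: "hermitian_mat A" and psd: "0 \<le> Re (quad_form A (axis i 1))"
    using assms unfolding psd_mat_iff_quad_form by auto
  have "A $ i $ i = cnj (A $ i $ i)"
    by (rule hermitian_mat_entry[OF herm])
  then have "Im (A $ i $ i) = - Im (A $ i $ i)"
    by (metis cnj.sel(2))
  with psd show ?thesis
    by (simp add: quad_form_axis cmod_eq_Re)
qed

lemma density_op_trace_Re:
  assumes "density_op A"
  shows "(\<Sum>i\<in>UNIV. Re (A $ i $ i)) = 1"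
proof -
  have "Re (trace A) = 1"
    using assms unfolding density_op_def by simp
  then show ?thesis
    unfolding trace_def by simp
qed

lemma density_op_sum_norm_entries:
  assumes "density_op A"
  shows "(\<Sum>i\<in>UNIV. \<Sum>j\<in>UNIV. cmod (A $ i $ j)) = 1 + coh_l1 A"
proof -
  have "(\<Sum>j\<in>UNIV. cmod (A $ i $ j))
      = (\<Sum>j\<in>UNIV. (if i = j then cmod (A $ i $ j) else 0) + (if i \<noteq> j then cmod (A $ i $ j) else 0))" for i
    by (intro sum.cong) auto
  then show ?thesis
    unfolding coh_l1_def
    using assms unfolding density_op_def
    by (simp add: sum.distrib psd_mat_diag_norm density_op_trace_Re[OF assms])
qed

lemma phi_plus_exp_conj_diag:
  fixes A U :: "complex^'n^'n"
  assumes "diag_mat U"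
  shows "phi_plus_exp (adjoint_mat U ** A ** U) = quad_form A (\<chi> i. U $ i $ i) / of_nat CARD('n)"
  unfolding phi_plus_exp_def quad_form_def by (simp add: diag_mat_conj_entry[OF assms])

lemma Re_quad_form_unimodular_le:
  assumes "density_op A" and "\<And>i. cmod (v $ i) = 1"
  shows "Re (quad_form A v) \<le> 1 + coh_l1 A"
proof -
  have "Re (quad_form A v) \<le> (\<Sum>i\<in>UNIV. \<Sum>j\<in>UNIV. cmod (cnj (v $ i) * A $ i $ j * v $ j))"
    unfolding quad_form_def Re_sum by (intro sum_mono complex_Re_le_cmod)
  also have "\<dots> = 1 + coh_l1 A"
    using assms by (simp add: norm_mult density_op_sum_norm_entries)
  finally show ?thesis .
qed

lemma quad_form_aligned_phases:
  assumes "density_op A" and "diag_mat U"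
    and "\<And>i j. (adjoint_mat U ** A ** U) $ i $ j = of_real (cmod (A $ i $ j))"
  shows "quad_form A (\<chi> i. U $ i $ i) = of_real (1 + coh_l1 A)"
proof -
  have "quad_form A (\<chi> i. U $ i $ i) = (\<Sum>i\<in>UNIV. \<Sum>j\<in>UNIV. (adjoint_mat U ** A ** U) $ i $ j)"
    unfolding quad_form_def by (simp add: diag_mat_conj_entry[OF assms(2)])
  then show ?thesis
    by (simp add: assms(3) density_op_sum_norm_entries[OF assms(1)] flip: of_real_sum)
qed

lemma coh_fraction_eq_coh_l1_norm:
  assumes "density_op \<rho>" and "diag_unitary U"
    and "\<And>i j. (adjoint_mat U ** \<rho> ** U) $ i $ j = of_real (cmod (\<rho> $ i $ j))"
  shows "coh_fraction \<rho> = coh_l1_norm \<rho>"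
  unfolding coh_fraction_def
proof (rule cSup_eq_maximum)
  have "diag_mat U"
    using assms(2) unfolding diag_unitary_def by simp
  then have "Re (phi_plus_exp (adjoint_mat U ** \<rho> ** U)) = coh_l1_norm \<rho>"
    using assms by (simp add: phi_plus_exp_conj_diag quad_form_aligned_phases coh_l1_norm_def)
  then show "coh_l1_norm \<rho> \<in> (\<lambda>U. Re (phi_plus_exp (adjoint_mat U ** \<rho> ** U))) ` {U. diag_unitary U}"
    using assms(2) by force
next
  fix x
  assume "x \<in> (\<lambda>U. Re (phi_plus_exp (adjoint_mat U ** \<rho> ** U))) ` {U. diag_unitary U}"
  then obtain V where V: "diag_unitary V" and x: "x = Re (phi_plus_exp (adjoint_mat V ** \<rho> ** V))"
    by blast
  have "Re (quad_form \<rho> (\<chi> i. V $ i $ i)) \<le> 1 + coh_l1 \<rho>"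
    using Re_quad_form_unimodular_le[OF assms(1)] diag_unitary_entry_norm[OF V] by simp
  moreover have "diag_mat V"
    using V unfolding diag_unitary_def by simp
  ultimately show "x \<le> coh_l1_norm \<rho>"
    unfolding x coh_l1_norm_def by (simp add: phi_plus_exp_conj_diag divide_right_mono)
qed

lemma sum_sym_products_le_row_sums:
  fixes c :: "'a::finite \<Rightarrow> 'a \<Rightarrow> real"
  assumes nonneg: "\<And>i j. 0 \<le> c i j" and sym: "\<And>i j. c i j = c j i"
  shows "(\<Sum>i\<in>UNIV. \<Sum>j\<in>UNIV. c i j * x i * x j) \<le> (\<Sum>i\<in>UNIV. (\<Sum>j\<in>UNIV. c i j) * (x i)\<^sup>2)"
proof -
  define S where "S = (\<Sum>i\<in>UNIV. \<Sum>j\<in>UNIV. c i j * (x i)\<^sup>2)"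
  have "2 * (\<Sum>i\<in>UNIV. \<Sum>j\<in>UNIV. c i j * x i * x j)
      \<le> (\<Sum>i\<in>UNIV. \<Sum>j\<in>UNIV. c i j * (x i)\<^sup>2 + c i j * (x j)\<^sup>2)"
    unfolding sum_distrib_left
  proof (intro sum_mono)
    fix i j
    have "0 \<le> c i j * (x i - x j)\<^sup>2"
      using nonneg by simp
    then show "2 * (c i j * x i * x j) \<le> c i j * (x i)\<^sup>2 + c i j * (x j)\<^sup>2"
      by (simp add: power2_eq_square algebra_simps)
  qed
  also have "\<dots> = S + S"
    unfolding S_def sum.distrib by (subst (2) sum.swap) (simp add: sym)
  finally show ?thesis
    unfolding S_def by (simp add: sum_distrib_right)
qed

definition offdiag_row_norm :: "complex^'n^'n \<Rightarrow> 'n \<Rightarrow> real" where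
  "offdiag_row_norm A i = (\<Sum>j\<in>UNIV. if i \<noteq> j then cmod (A $ i $ j) else 0)"

definition l1_complement :: "complex^'n^'n \<Rightarrow> complex^'n^'n" where
  "l1_complement A = (\<chi> i j. if i = j then of_real (offdiag_row_norm A i) else - A $ i $ j)"

lemma trace_l1_complement: "trace (l1_complement A) = of_real (coh_l1 A)"
  unfolding trace_def l1_complement_def coh_l1_def offdiag_row_norm_def by simp

lemma psd_l1_complement:
  fixes A :: "complex^'n^'n"
  assumes "hermitian_mat A"
  shows "psd_mat (l1_complement A)"
proof -
  define c where "c i j = (if i \<noteq> j then cmod (A $ i $ j) else 0)" for i j
  define D :: "complex^'n^'n" where "D = (\<chi> i j. if i = j then of_real (offdiag_row_norm A i) else 0)"
  define Off :: "complex^'n^'n" where "Off = (\<chi> i j. if i = j then 0 else A $ i $ j)"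
  have "0 \<le> Re (quad_form (l1_complement A) v)" for v
  proof -
    have "quad_form (l1_complement A) v = 1 * quad_form D v + (- 1) * quad_form Off v"
      by (rule quad_form_lincomb) (simp add: l1_complement_def D_def Off_def)
    moreover have "Re (quad_form D v) = (\<Sum>i\<in>UNIV. offdiag_row_norm A i * (cmod (v $ i))\<^sup>2)"
      by (simp add: quad_form_diag_mat D_def diag_mat_def)
    moreover have "Re (quad_form Off v) \<le> (\<Sum>i\<in>UNIV. \<Sum>j\<in>UNIV. c i j * cmod (v $ i) * cmod (v $ j))"
    proof -
      have "Re (quad_form Off v) \<le> cmod (quad_form Off v)"
        by (rule complex_Re_le_cmod)
      also have "\<dots> \<le> (\<Sum>i\<in>UNIV. \<Sum>j\<in>UNIV. cmod (cnj (v $ i) * Off $ i $ j * v $ j))"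
        unfolding quad_form_def by (rule order_trans[OF norm_sum sum_mono[OF norm_sum]])
      also have "\<dots> = (\<Sum>i\<in>UNIV. \<Sum>j\<in>UNIV. c i j * cmod (v $ i) * cmod (v $ j))"
        unfolding Off_def c_def by (intro sum.cong) (auto simp: norm_mult)
      finally show ?thesis .
    qed
    moreover have "(\<Sum>i\<in>UNIV. \<Sum>j\<in>UNIV. c i j * cmod (v $ i) * cmod (v $ j))
        \<le> (\<Sum>i\<in>UNIV. offdiag_row_norm A i * (cmod (v $ i))\<^sup>2)"
    proof -
      have "c i j = c j i" for i j
        using hermitian_mat_entry[OF assms, of i j] unfolding c_def by auto
      then show ?thesis
        using sum_sym_products_le_row_sums[of c "\<lambda>i. cmod (v $ i)"]
        unfolding c_def offdiag_row_norm_def by simp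
    qed
    ultimately show ?thesis
      by simp
  qed
  moreover have "hermitian_mat (l1_complement A)"
  proof (rule hermitian_matI)
    fix i j
    show "l1_complement A $ j $ i = cnj (l1_complement A $ i $ j)"
      using hermitian_mat_entry[OF assms, of i j] by (simp add: l1_complement_def)
  qed
  ultimately show ?thesis
    unfolding psd_mat_iff_quad_form by simp
qed

lemma density_op_convex_comb:
  assumes "density_op A" and "density_op B" and "0 \<le> a" and "0 \<le> b" and "a + b = 1"
  shows "density_op (\<chi> i j. of_real a * A $ i $ j + of_real b * B $ i $ j)" (is "density_op ?C")
proof -
  have "0 \<le> Re (quad_form ?C v)" for v
  proof -
    have "quad_form ?C v = of_real a * quad_form A v + of_real b * quad_form B v"
      by (rule quad_form_lincomb) simp
    moreover have "0 \<le> Re (quad_form A v)" and "0 \<le> Re (quad_form B v)"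
      using assms(1,2) unfolding density_op_def psd_mat_iff_quad_form by auto
    ultimately show ?thesis
      using assms(3,4) by simp
  qed
  moreover have "hermitian_mat ?C"
  proof (rule hermitian_matI)
    fix i j
    have "hermitian_mat A" and "hermitian_mat B"
      using assms(1,2) unfolding density_op_def psd_mat_def by auto
    then show "?C $ j $ i = cnj (?C $ i $ j)"
      using hermitian_mat_entry[of A i j] hermitian_mat_entry[of B i j] by simp
  qed
  moreover have "trace ?C = of_real a * trace A + of_real b * trace B"
    unfolding trace_def by (simp add: sum.distrib sum_distrib_left)
  ultimately show ?thesis
    using assms unfolding density_op_def psd_mat_iff_quad_form by (simp flip: of_real_add)
qed

lemma density_op_normalize:
  fixes A :: "complex^'n^'n"
  assumes "psd_mat A" and "trace A = of_real t" and "0 < t"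
  shows "density_op (\<chi> i j. A $ i $ j / of_real t)"
proof -
  have herm: "hermitian_mat A" and psd: "\<And>v. 0 \<le> Re (quad_form A v)"
    using assms(1) unfolding psd_mat_iff_quad_form by auto
  have "hermitian_mat (\<chi> i j. A $ i $ j / of_real t)"
  proof (rule hermitian_matI)
    fix i j
    show "(\<chi> i j. A $ i $ j / of_real t) $ j $ i = cnj ((\<chi> i j. A $ i $ j / of_real t) $ i $ j)"
      using hermitian_mat_entry[OF herm, of i j] by simp
  qed
  moreover have "quad_form (\<chi> i j. A $ i $ j / of_real t) v = of_real (1 / t) * quad_form A v + 0 * quad_form A v" for v
    by (rule quad_form_lincomb) simp
  moreover have "trace (\<chi> i j. A $ i $ j / of_real t) = trace A / of_real t"
    unfolding trace_def by (simp add: sum_divide_distrib)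
  ultimately show ?thesis
    using assms(2,3) psd unfolding density_op_def psd_mat_iff_quad_form by simp
qed

definition robust_mix :: "real \<Rightarrow> complex^'n^'n \<Rightarrow> complex^'n^'n \<Rightarrow> complex^'n^'n" where
  "robust_mix s \<rho> \<tau> = (\<chi> i j. (\<rho> $ i $ j + of_real s * \<tau> $ i $ j) / (1 + of_real s))"

definition robustness_set :: "complex^'n^'n \<Rightarrow> real set" where
  "robustness_set \<rho> = {s. 0 \<le> s \<and> (\<exists>\<tau>. density_op \<tau> \<and> incoherent (robust_mix s \<rho> \<tau>))}"

lemma coh_robustness_eq_Inf: "coh_robustness \<rho> = Inf (robustness_set \<rho>)"
  unfolding coh_robustness_def robustness_set_def robust_mix_def ..

lemma density_op_robust_mix:
  assumes "density_op \<rho>" and "density_op \<tau>" and "0 \<le> s"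
  shows "density_op (robust_mix s \<rho> \<tau>)"
proof -
  have "robust_mix s \<rho> \<tau> = (\<chi> i j. of_real (1 / (1 + s)) * \<rho> $ i $ j + of_real (s / (1 + s)) * \<tau> $ i $ j)"
    unfolding robust_mix_def by (simp add: vec_eq_iff add_divide_distrib)
  moreover have "1 / (1 + s) + s / (1 + s) = 1"
    using assms(3) by (simp add: field_simps)
  ultimately show ?thesis
    using density_op_convex_comb[OF assms(1,2), of "1 / (1 + s)" "s / (1 + s)"] assms(3) by simp
qed

lemma robustness_set_lower_bound:
  assumes "s \<in> robustness_set \<rho>" and "\<And>i. cmod (v $ i) = 1"
  shows "Re (quad_form \<rho> v) \<le> 1 + s"
proof -
  obtain \<tau> where s: "0 \<le> s" and \<tau>: "density_op \<tau>" and M: "incoherent (robust_mix s \<rho> \<tau>)"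
    using assms(1) unfolding robustness_set_def by blast
  have "1 + complex_of_real s \<noteq> 0"
    using s by (simp add: complex_eq_iff)
  then have "quad_form \<rho> v = (1 + of_real s) * quad_form (robust_mix s \<rho> \<tau>) v + (- of_real s) * quad_form \<tau> v"
    by (intro quad_form_lincomb) (simp add: robust_mix_def field_simps)
  moreover have "quad_form (robust_mix s \<rho> \<tau>) v = 1"
    using M assms(2) unfolding incoherent_def density_op_def trace_def by (simp add: quad_form_diag_mat)
  moreover have "0 \<le> Re (quad_form \<tau> v)"
    using \<tau> unfolding density_op_def psd_mat_iff_quad_form by simp
  ultimately show ?thesis
    using s by simp
qed

lemma diag_mat_if_coh_l1_eq_0:
  assumes "coh_l1 A = 0"
  shows "diag_mat A"
proof -
  have "\<forall>i. \<forall>j. (if i \<noteq> j then cmod (A $ i $ j) else 0) = 0"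
    using assms unfolding coh_l1_def by (simp add: sum_nonneg_eq_0_iff sum_nonneg)
  then show ?thesis
    unfolding diag_mat_def by (metis norm_eq_zero)
qed

lemma coh_l1_mem_robustness_set:
  assumes "density_op \<rho>"
  shows "coh_l1 \<rho> \<in> robustness_set \<rho>"
proof (cases "coh_l1 \<rho> = 0")
  case True
  have "robust_mix 0 \<rho> \<rho> = \<rho>"
    unfolding robust_mix_def by (simp add: vec_eq_iff)
  then show ?thesis
    using assms diag_mat_if_coh_l1_eq_0[OF True]
    unfolding robustness_set_def incoherent_def True by auto
next
  case False
  define L where "L = coh_l1 \<rho>"
  have "0 < L"
    using False unfolding L_def coh_l1_def by (simp add: order_le_neq_trans sum_nonneg)
  define \<tau> where "\<tau> = (\<chi> i j. l1_complement \<rho> $ i $ j / of_real L)"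
  have \<tau>: "density_op \<tau>"
    unfolding \<tau>_def
    using assms \<open>0 < L\<close> by (intro density_op_normalize psd_l1_complement)
      (auto simp: density_op_def psd_mat_def trace_l1_complement L_def)
  have "diag_mat (robust_mix L \<rho> \<tau>)"
    using \<open>0 < L\<close> unfolding diag_mat_def robust_mix_def \<tau>_def l1_complement_def by simp
  then show ?thesis
    using assms \<tau> \<open>0 < L\<close> density_op_robust_mix[OF assms \<tau>, of L]
    unfolding robustness_set_def incoherent_def L_def by auto
qed

lemma coh_robustness_eq_coh_l1:
  assumes "density_op \<rho>" and "diag_unitary U"
    and "\<And>i j. (adjoint_mat U ** \<rho> ** U) $ i $ j = of_real (cmod (\<rho> $ i $ j))"
  shows "coh_robustness \<rho> = coh_l1 \<rho>"
  unfolding coh_robustness_eq_Inf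
proof (rule cInf_eq_minimum)
  show "coh_l1 \<rho> \<in> robustness_set \<rho>"
    using assms(1) by (rule coh_l1_mem_robustness_set)
next
  fix s
  assume "s \<in> robustness_set \<rho>"
  moreover have "quad_form \<rho> (\<chi> i. U $ i $ i) = of_real (1 + coh_l1 \<rho>)"
    using assms by (simp add: quad_form_aligned_phases diag_unitary_def)
  ultimately show "coh_l1 \<rho> \<le> s"
    using robustness_set_lower_bound[of s \<rho> "\<chi> i. U $ i $ i"] diag_unitary_entry_norm[OF assms(2)]
    by simp
qed

theorem theorem1:
  fixes \<rho> :: "complex^'n^'n"
  assumes "CARD('n) \<ge> 2"
    and "density_op \<rho>"
    and "\<exists>U. diag_unitary U \<and>
           (\<forall>i j. (adjoint_mat U ** \<rho> ** U) $ i $ j = complex_of_real (cmod (\<rho> $ i $ j)))"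
  shows "coh_fraction \<rho> = coh_robustness_norm \<rho> \<and> coh_robustness_norm \<rho> = coh_l1_norm \<rho>"
proof -
  obtain U where U: "diag_unitary U"
    and aligned: "\<And>i j. (adjoint_mat U ** \<rho> ** U) $ i $ j = of_real (cmod (\<rho> $ i $ j))"
    using assms(3) by blast
  have "coh_fraction \<rho> = coh_l1_norm \<rho>"
    using assms(2) U aligned by (rule coh_fraction_eq_coh_l1_norm)
  moreover have "coh_robustness_norm \<rho> = coh_l1_norm \<rho>"
    using coh_robustness_eq_coh_l1[OF assms(2) U aligned]
    unfolding coh_robustness_norm_def coh_l1_norm_def by simp
  ultimately show ?thesis
    by simp
qed

end
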